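(* Let $T=\mathbb{R}^k/\mathbb{Z}^k$, let $m$ and $C$ be natural numbers, and let $\Lambda\leq T[m]$ be a subgroup with $[T[m]:\Lambda]\leq C$. Then there is a natural number $m'$ satisfying $m'\geq m/C!$ and $T[m']\leq\Lambda$.
   Context: For a natural number $m$, $T[m]$ denotes the $m$-torsion subgroup of $T$. *)

theory Defs
  imports "HOL-Algebra.Algebra" Complex_Main
begin

text \<open>The torus T = R^k / Z^k, represented by its fundamental domain [0,1)^k
  (coordinates with index >= k are fixed to 0), with addition modulo 1.
  Written multiplicatively as an HOL-Algebra monoid.\<close>

definition torus :: "nat \<Rightarrow> (nat \<Rightarrow> real) monoid" where
  "torus k = \<lparr>partial_object.carrier = {x. (\<forall>i<k. 0 \<le> x i \<and> x i < 1) \<and> (\<forall>i\<ge>k. x i = 0)},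
              monoid.mult = (\<lambda>x y i. frac (x i + y i)),
              monoid.one = (\<lambda>i. 0)\<rparr>"

definition torsion :: "nat \<Rightarrow> nat \<Rightarrow> (nat \<Rightarrow> real) set" where
  "torsion k m = {x \<in> carrier (torus k). x [^]\<^bsub>torus k\<^esub> m = \<one>\<^bsub>torus k\<^esub>}"

end

theory Submission
  imports Defs "HOL-Number_Theory.Cong"
begin

(* The quotient T[m]/\<Lambda> has order N \<le> C, so N divides C! and hence C! \<cdot> T[m] \<subseteq> \<Lambda>.
   For n > 0 write g = gcd n m, m = g m', n = g n'. Since T is divisible, every x \<in> T[m']
   equals n \<cdot> y for a y \<in> T[m], namely a g-th root of u \<cdot> x with n' u \<equiv> 1 (mod m').
   So T[m'] \<subseteq> \<Lambda> for m' = m / gcd(C!, m) \<ge> m / C!; for m = 0 this is m' = 0 and T[0] = T. *)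

lemma (in normal) nat_pow_mem_if_index_dvd:
  assumes "card (rcosets H) dvd n" and x: "x \<in> carrier G"
  shows "x [^] n \<in> H"
proof -
  interpret Mod: group "G Mod H" by (rule factorgroup_is_group)
  have coset: "H #> x \<in> carrier (G Mod H)"
    using x by (auto simp: FactGroup_def RCOSETS_def)
  have "H #> (x [^] n) = (H #> x) [^]\<^bsub>G Mod H\<^esub> n"
    by (rule hom_nat_pow[OF r_coset_hom_Mod x is_group Mod.is_group])
  also have "\<dots> = \<one>\<^bsub>G Mod H\<^esub>"
  proof -
    obtain q where "n = order (G Mod H) * q"
      using assms(1) by (auto simp: order_def FactGroup_def)
    then show ?thesis
      using coset by (metis Mod.nat_pow_pow Mod.nat_pow_one Mod.pow_order_eq_1)
  qed
  finally show ?thesis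
    using coset_join1 x subgroup_axioms by simp
qed

lemma (in group) nat_pow_eq_self_if_cong_1:
  fixes n a :: nat
  assumes x: "x \<in> carrier G" and "x [^] n = \<one>" and "[a = 1] (mod n)"
  shows "x [^] a = x"
proof -
  have "ord x dvd n"
    using assms(2) pow_eq_id[OF x] by simp
  with assms(3) have "int (ord x) dvd int 1 - int a"
    by (metis cong_dvd_modulus_nat cong_iff_dvd_diff cong_int_iff cong_sym)
  then have "x [^] int a = x [^] int 1"
    using int_pow_eq[OF x] by simp
  then show ?thesis
    using x by (simp add: int_pow_int)
qed

lemma (in comm_group) subgroup_is_comm_group:
  assumes "subgroup H G"
  shows "comm_group (G\<lparr>carrier := H\<rparr>)"
  using group.group_comm_groupI[OF subgroup_imp_group[OF assms]] m_comm
    subgroup.mem_carrier[OF assms] by simp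

lemma div_gcd_ge_div:
  assumes "0 < n"
  shows "real m / real n \<le> real (m div gcd n m)"
proof -
  have "gcd n m \<le> n" and "0 < gcd n m"
    using assms by (simp_all add: gcd_le1_nat)
  moreover have "real m = real (gcd n m) * real (m div gcd n m)"
    by (simp flip: of_nat_mult)
  ultimately have "real m \<le> real n * real (m div gcd n m)"
    by (simp add: mult_right_mono)
  then show ?thesis
    using assms by (simp add: divide_le_eq mult.commute)
qed

lemma torus_carrier:
  "carrier (torus k) = {x. (\<forall>i<k. 0 \<le> x i \<and> x i < 1) \<and> (\<forall>i\<ge>k. x i = 0)}"
  by (simp add: torus_def)

lemma torus_mult: "x \<otimes>\<^bsub>torus k\<^esub> y = (\<lambda>i. frac (x i + y i))"
  by (simp add: torus_def)

lemma torus_one: "\<one>\<^bsub>torus k\<^esub> = (\<lambda>i. 0)"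
  by (simp add: torus_def)

lemma frac_torus_coordinate:
  assumes "x \<in> carrier (torus k)"
  shows "frac (x i) = x i"
  using assms by (cases "i < k") (auto simp: torus_carrier frac_eq)

lemma comm_group_torus: "comm_group (torus k)"
proof (rule comm_groupI)
  fix x assume x: "x \<in> carrier (torus k)"
  then show "\<one>\<^bsub>torus k\<^esub> \<otimes>\<^bsub>torus k\<^esub> x = x"
    by (simp add: torus_mult torus_one frac_torus_coordinate)
  have "(\<lambda>i. frac (- x i)) \<in> carrier (torus k)"
    using x by (auto simp: torus_carrier frac_lt_1)
  moreover have "(\<lambda>i. frac (- x i)) \<otimes>\<^bsub>torus k\<^esub> x = \<one>\<^bsub>torus k\<^esub>"
    by (simp add: torus_mult torus_one)
  ultimately show "\<exists>y\<in>carrier (torus k). y \<otimes>\<^bsub>torus k\<^esub> x = \<one>\<^bsub>torus k\<^esub>"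
    by blast
qed (auto simp: torus_carrier torus_mult torus_one frac_lt_1 ac_simps)

lemma torus_nat_pow:
  assumes "x \<in> carrier (torus k)"
  shows "x [^]\<^bsub>torus k\<^esub> n = (\<lambda>i. frac (real n * x i))"
  using assms by (induction n) (simp_all add: torus_mult torus_one algebra_simps)

lemma torus_divisible:
  fixes g :: nat
  assumes "0 < g" and x: "x \<in> carrier (torus k)"
  obtains y where "y \<in> carrier (torus k)" and "y [^]\<^bsub>torus k\<^esub> g = x"
proof
  show y: "(\<lambda>i. x i / real g) \<in> carrier (torus k)"
    using assms by (auto simp: torus_carrier divide_less_eq_1)
  show "(\<lambda>i. x i / real g) [^]\<^bsub>torus k\<^esub> g = x"
    using assms by (simp add: torus_nat_pow[OF y] frac_torus_coordinate)
qed

lemma subgroup_torsion: "subgroup (torsion k m) (torus k)"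
proof -
  interpret comm_group "torus k" by (rule comm_group_torus)
  show ?thesis
    by (rule subgroupI)
      (auto simp: torsion_def nat_pow_inv nat_pow_distrib)
qed

lemma torsion_div_gcd_subset_image_nat_pow:
  assumes "0 < n"
  shows "torsion k (m div gcd n m) \<subseteq> (\<lambda>y. y [^]\<^bsub>torus k\<^esub> n) ` torsion k m"
proof
  interpret T: comm_group "torus k" by (rule comm_group_torus)
  define g where "g = gcd n m"
  define m' where "m' = m div g"
  define n' where "n' = n div g"
  have g: "0 < g" "m = g * m'" "n = g * n'"
    using assms by (simp_all add: g_def m'_def n'_def)
  have "coprime n' m'"
    using assms by (simp add: n'_def m'_def g_def div_gcd_coprime)
  then obtain u where u: "[n' * u = 1] (mod m')"
    using cong_solve_coprime_nat by auto
  fix x assume "x \<in> torsion k (m div gcd n m)"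
  then have x: "x \<in> carrier (torus k)" "x [^]\<^bsub>torus k\<^esub> m' = \<one>\<^bsub>torus k\<^esub>"
    by (simp_all add: torsion_def m'_def g_def)
  obtain y where y: "y \<in> carrier (torus k)" "y [^]\<^bsub>torus k\<^esub> g = x [^]\<^bsub>torus k\<^esub> u"
    using torus_divisible[OF g(1) T.nat_pow_closed[OF x(1)]] by blast
  have "y [^]\<^bsub>torus k\<^esub> m = (y [^]\<^bsub>torus k\<^esub> g) [^]\<^bsub>torus k\<^esub> m'"
    using g(2) y(1) by (simp add: T.nat_pow_pow)
  also have "\<dots> = (x [^]\<^bsub>torus k\<^esub> m') [^]\<^bsub>torus k\<^esub> u"
    using x(1) y(2) by (simp add: T.nat_pow_pow mult.commute)
  finally have "y [^]\<^bsub>torus k\<^esub> m = \<one>\<^bsub>torus k\<^esub>"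
    using x(2) by simp
  then have y_torsion: "y \<in> torsion k m"
    using y(1) by (simp add: torsion_def)
  have "y [^]\<^bsub>torus k\<^esub> n = (y [^]\<^bsub>torus k\<^esub> g) [^]\<^bsub>torus k\<^esub> n'"
    using g(3) y(1) by (simp add: T.nat_pow_pow)
  also have "\<dots> = x [^]\<^bsub>torus k\<^esub> (n' * u)"
    using x(1) y(2) by (simp add: T.nat_pow_pow mult.commute)
  also have "\<dots> = x"
    using T.nat_pow_eq_self_if_cong_1[OF x u] .
  finally show "x \<in> (\<lambda>y. y [^]\<^bsub>torus k\<^esub> n) ` torsion k m"
    using y_torsion by blast
qed

theorem lemma3p12:
  fixes k m C :: nat and \<Lambda> :: "(nat \<Rightarrow> real) set"
  assumes "subgroup \<Lambda> (torus k)"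
    and "\<Lambda> \<subseteq> torsion k m"
    and "finite (rcosets\<^bsub>(torus k)\<lparr>carrier := torsion k m\<rparr>\<^esub> \<Lambda>)"
    and "card (rcosets\<^bsub>(torus k)\<lparr>carrier := torsion k m\<rparr>\<^esub> \<Lambda>) \<le> C"
  shows "\<exists>m'::nat. real m' \<ge> real m / fact C \<and> torsion k m' \<subseteq> \<Lambda>"
proof -
  let ?G = "(torus k)\<lparr>carrier := torsion k m\<rparr>"
  interpret T: comm_group "torus k" by (rule comm_group_torus)
  interpret G: comm_group ?G by (rule T.subgroup_is_comm_group[OF subgroup_torsion])
  interpret normal \<Lambda> ?G
    by (rule G.subgroup_imp_normal[OF T.subgroup_incl[OF assms(1) subgroup_torsion assms(2)]])
  have "\<Union> (rcosets\<^bsub>?G\<^esub> \<Lambda>) \<noteq> {}"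
    using G.one_closed by (simp only: G.rcosets_part_G[OF subgroup_axioms]) blast
  then have "card (rcosets\<^bsub>?G\<^esub> \<Lambda>) dvd fact C"
    using assms(3,4) by (intro dvd_fact) (auto simp: Suc_le_eq card_gt_0_iff)
  then have "z [^]\<^bsub>torus k\<^esub> (fact C :: nat) \<in> \<Lambda>" if "z \<in> torsion k m" for z
    using nat_pow_mem_if_index_dvd that by (simp flip: T.nat_pow_consistent)
  then have "torsion k (m div gcd (fact C) m) \<subseteq> \<Lambda>"
    using torsion_div_gcd_subset_image_nat_pow[of "fact C" k m] by auto
  moreover have "real m / fact C \<le> real (m div gcd (fact C) m)"
    using div_gcd_ge_div[of "fact C" m] by simp
  ultimately show ?thesis
    by blast
qed

end
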